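(* For any ideal $\mathcal{I}$: (a) if $\mathcal{I}$ is a hereditary weak P-ideal then $\mathcal{I}$ is unboring, and if $\mathcal{I}$ is unboring then $\mathcal{I}$ is a weak P-ideal (equivalently: $\mathrm{Fin}^2\sqsubseteq\mathcal{I}\implies\mathcal{BI}\sqsubseteq\mathcal{I}\implies(\exists A\notin\mathcal{I})\ \mathrm{Fin}^2\sqsubseteq\mathcal{I}|A$); (b) neither of the two implications in (a) can be reversed in general (i.e., there is an unboring ideal which is not a hereditary weak P-ideal, and a weak P-ideal which is boring); (c) if $\mathcal{I}$ is contained in some unboring ideal then $\mathcal{I}$ is unboring; in particular, if $\mathcal{I}$ is contained in some hereditary weak P-ideal then $\mathcal{I}$ is unboring.
   Context: An ideal on an infinite countable set $X$ is a family $\mathcal{I}\subseteq\mathcal{P}(X)$ closed under subsets and finite unions, containing all finite subsets, with $X\notin\mathcal{I}$. $\mathcal{I}|A=\{B\cap A:B\in\mathcal{I}\}$. $\mathrm{Fin}^2$: ideal on $\omega^2$ of all $A$ with only finitely many $n$ such that $\{m:(n,m)\in A\}$ is infinite. $\mathcal{BI}$: ideal on $\omega^3$ of all $A$ for which there is $k$ with $\{(j,l):(i,j,l)\in A\}\in\mathrm{Fin}^2$ for $i<k$ and finite for $i\ge k$. $\mathcal{I}\sqsubseteq\mathcal{J}$: there is a bijection $f:\bigcup\mathcal{J}\to\bigcup\mathcal{I}$ with $f^{-1}[A]\in\mathcal{J}$ for all $A\in\mathcal{I}$. $\mathcal{I}$ is boring if $\mathcal{BI}\sqsubseteq\mathcal{I}$,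 unboring otherwise. $\mathcal{I}$ is a weak P-ideal if $\mathrm{Fin}^2\not\sqsubseteq\mathcal{I}$ (equivalently, every partition of $\bigcup\mathcal{I}$ into countably many sets from $\mathcal{I}$ admits $S\notin\mathcal{I}$ meeting each piece in a finite set), and a hereditary weak P-ideal if $\mathrm{Fin}^2\not\sqsubseteq\mathcal{I}|A$ for every $A\notin\mathcal{I}$. *)

theory Defs
  imports Main "HOL-Library.Countable_Set"
begin

definition ideal_on :: "'a set \<Rightarrow> 'a set set \<Rightarrow> bool" where
  "ideal_on X I \<longleftrightarrow> infinite X \<and> countable X \<and> I \<subseteq> Pow X
     \<and> (\<forall>A\<in>I. \<forall>B. B \<subseteq> A \<longrightarrow> B \<in> I)
     \<and> (\<forall>A\<in>I. \<forall>B\<in>I. A \<union> B \<in> I)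
     \<and> (\<forall>F. F \<subseteq> X \<and> finite F \<longrightarrow> F \<in> I)
     \<and> X \<notin> I"

definition restr :: "'a set set \<Rightarrow> 'a set \<Rightarrow> 'a set set" where
  "restr I A = {B \<inter> A | B. B \<in> I}"

definition kat_le :: "'a set set \<Rightarrow> 'b set set \<Rightarrow> bool" where
  "kat_le I J \<longleftrightarrow> (\<exists>f. bij_betw f (\<Union>J) (\<Union>I) \<and> (\<forall>A\<in>I. f -` A \<inter> \<Union>J \<in> J))"

definition Fin2 :: "(nat \<times> nat) set set" where
  "Fin2 = {A. finite {n. infinite {m. (n, m) \<in> A}}}"

definition BI :: "(nat \<times> nat \<times> nat) set set" where
  "BI = {A. \<exists>k. (\<forall>i<k. {(j, l). (i, j, l) \<in> A} \<in> Fin2)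
                 \<and> (\<forall>i\<ge>k. finite {(j, l). (i, j, l) \<in> A})}"

definition boring :: "'a set set \<Rightarrow> bool" where
  "boring I \<longleftrightarrow> kat_le BI I"

definition unboring :: "'a set set \<Rightarrow> bool" where
  "unboring I \<longleftrightarrow> \<not> boring I"

definition weak_P :: "'a set set \<Rightarrow> bool" where
  "weak_P I \<longleftrightarrow> \<not> kat_le Fin2 I"

definition hereditary_weak_P :: "'a set set \<Rightarrow> bool" where
  "hereditary_weak_P I \<longleftrightarrow> (\<forall>A. A \<subseteq> \<Union>I \<and> A \<notin> I \<longrightarrow> \<not> kat_le Fin2 (restr I A))"

end

theory Submission
  imports Defs
begin

(* The core is that Fin2 is not below BI. BI is covered by the columns {i} \<times> \<omega>\<^sup>2, none
   of which is in BI, while every set in BI is finite on some column; a Fin2 set chosen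
   diagonally meets the image of every column infinitely, which rules out any bijection
   witnessing Fin2 \<sqsubseteq> BI. Conversely flattening \<omega>\<^sup>3 onto \<omega>\<^sup>2 column by column gives BI \<sqsubseteq> Fin2,
   so Fin2 \<sqsubseteq> I implies BI \<sqsubseteq> I.
   If BI \<sqsubseteq> I via f, then either the preimage of some column is I-positive, and Fin2 is
   below the restriction of I to it, or all these preimages lie in I, and then the same
   flattening shows Fin2 \<sqsubseteq> I; so boring ideals are not hereditary weak P-ideals.
   For the counterexamples: Fin2 on the even numbers plus Fin on the odd numbers is not
   tall, whereas BI is tall and tallness passes upwards along \<sqsubseteq>; a copy of BI on \<omega> is
   boring but, as Fin2 is not below BI, a weak P-ideal. *)

section \<open>Katetov order and ideals\<close>

lemma kat_le_trans:
  assumes "kat_le I J" and "kat_le J K"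
  shows "kat_le I K"
proof -
  obtain f where f: "bij_betw f (\<Union>J) (\<Union>I)" "\<forall>A\<in>I. f -` A \<inter> \<Union>J \<in> J"
    using assms(1) unfolding kat_le_def by blast
  obtain g where g: "bij_betw g (\<Union>K) (\<Union>J)" "\<forall>B\<in>J. g -` B \<inter> \<Union>K \<in> K"
    using assms(2) unfolding kat_le_def by blast
  have "(f \<circ> g) -` A \<inter> \<Union>K = g -` (f -` A \<inter> \<Union>J) \<inter> \<Union>K" for A
    using bij_betw_apply[OF g(1)] by (simp del: Union_iff add: set_eq_iff) blast
  then have "\<forall>A\<in>I. (f \<circ> g) -` A \<inter> \<Union>K \<in> K"
    using f(2) g(2) by (simp del: vimage_Int)
  with bij_betw_trans[OF g(1) f(1)] show ?thesis
    unfolding kat_le_def by blast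
qed

lemma kat_le_superset:
  assumes "kat_le K I" and "I \<subseteq> J" and "\<Union>I = \<Union>J"
  shows "kat_le K J"
proof -
  obtain f where "bij_betw f (\<Union>I) (\<Union>K)" "\<forall>A\<in>K. f -` A \<inter> \<Union>I \<in> I"
    using assms(1) unfolding kat_le_def by blast
  with assms(2,3) show ?thesis
    unfolding kat_le_def by (metis subsetD)
qed

lemma ideal_onI:
  assumes "infinite X" and "countable X" and "I \<subseteq> Pow X"
    and "\<And>A B. A \<in> I \<Longrightarrow> B \<subseteq> A \<Longrightarrow> B \<in> I"
    and "\<And>A B. A \<in> I \<Longrightarrow> B \<in> I \<Longrightarrow> A \<union> B \<in> I"
    and "\<And>F. F \<subseteq> X \<Longrightarrow> finite F \<Longrightarrow> F \<in> I" and "X \<notin> I"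
  shows "ideal_on X I"
  unfolding ideal_on_def using assms by (intro conjI ballI allI impI) auto

lemma ideal_on_Pow: "ideal_on X I \<Longrightarrow> I \<subseteq> Pow X"
  unfolding ideal_on_def by (elim conjE)

lemma ideal_on_subset: "ideal_on X I \<Longrightarrow> A \<in> I \<Longrightarrow> B \<subseteq> A \<Longrightarrow> B \<in> I"
  unfolding ideal_on_def by (elim conjE) blast

lemma ideal_on_Un: "ideal_on X I \<Longrightarrow> A \<in> I \<Longrightarrow> B \<in> I \<Longrightarrow> A \<union> B \<in> I"
  unfolding ideal_on_def by (elim conjE) blast

lemma ideal_on_finite: "ideal_on X I \<Longrightarrow> F \<subseteq> X \<Longrightarrow> finite F \<Longrightarrow> F \<in> I"
  unfolding ideal_on_def by (elim conjE) blast

lemma ideal_on_carrier: "ideal_on X I \<Longrightarrow> X \<notin> I"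
  unfolding ideal_on_def by (elim conjE)

lemma ideal_on_UN:
  assumes "ideal_on X I" and "finite F" and "\<And>i. i \<in> F \<Longrightarrow> C i \<in> I"
  shows "(\<Union>i\<in>F. C i) \<in> I"
  using assms(2,3)
proof (induction F rule: finite_induct)
  case empty
  then show ?case
    using ideal_on_finite[OF assms(1), of "{}"] by simp
next
  case (insert x F)
  then show ?case
    using ideal_on_Un[OF assms(1), of "C x" "\<Union>i\<in>F. C i"] by simp
qed

lemma Union_ideal_on:
  assumes "ideal_on X I"
  shows "\<Union>I = X"
proof
  show "\<Union>I \<subseteq> X"
    using ideal_on_Pow[OF assms] by blast
  show "X \<subseteq> \<Union>I"
  proof
    fix x
    assume "x \<in> X"
    then have "{x} \<in> I"
      using ideal_on_finite[OF assms, of "{x}"] by simp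
    then show "x \<in> \<Union>I"
      by blast
  qed
qed

lemma restr_ideal_on_self:
  assumes "ideal_on X I"
  shows "restr I X = I"
proof -
  have "B \<inter> X = B" if "B \<in> I" for B
    using ideal_on_Pow[OF assms] that by blast
  then show ?thesis
    unfolding restr_def by auto
qed

lemma restr_IntI: "B \<in> I \<Longrightarrow> B \<inter> A \<in> restr I A"
  unfolding restr_def by blast

lemma Union_restr:
  assumes "ideal_on X I" and "A \<subseteq> X"
  shows "\<Union>(restr I A) = A"
proof
  show "\<Union>(restr I A) \<subseteq> A"
    unfolding restr_def by blast
  have "{a} \<in> restr I A" if "a \<in> A" for a
    using ideal_on_finite[OF assms(1), of "{a}"] assms(2) that unfolding restr_def by blast
  then show "A \<subseteq> \<Union>(restr I A)"
    by blast
qed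

lemma ideal_on_vimage_bij:
  fixes g :: "'b \<Rightarrow> 'a"
  assumes J: "ideal_on UNIV J" and g: "bij g"
  shows "ideal_on UNIV {A. g -` A \<in> J}"
proof (rule ideal_onI)
  have "infinite (UNIV :: 'b set)"
    using J unfolding ideal_on_def by (elim conjE)
  then show "infinite (UNIV :: 'a set)"
    using bij_betw_finite[OF g] by simp
  have "countable (UNIV :: 'b set)"
    using J unfolding ideal_on_def by (elim conjE)
  then have "countable (range g)"
    by (rule countable_image)
  then show "countable (UNIV :: 'a set)"
    using bij_is_surj[OF g] by simp
  show "B \<in> {A. g -` A \<in> J}" if "A \<in> {A. g -` A \<in> J}" "B \<subseteq> A" for A B
    using ideal_on_subset[OF J _ vimage_mono[OF that(2)]] that(1) by simp
  show "A \<union> B \<in> {A. g -` A \<in> J}" if "A \<in> {A. g -` A \<in> J}" "B \<in> {A. g -` A \<in> J}" for A B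
    using ideal_on_Un[OF J] that by simp
  show "F \<in> {A. g -` A \<in> J}" if "finite F" for F
    using ideal_on_finite[OF J] finite_vimageI[OF that bij_is_inj[OF g]] by simp
  show "UNIV \<notin> {A. g -` A \<in> J}"
    using ideal_on_carrier[OF J] by simp
qed simp

lemma kat_le_vimage_bij:
  fixes g :: "'b \<Rightarrow> 'a"
  assumes J: "ideal_on UNIV J" and g: "bij g"
  shows "kat_le {A. g -` A \<in> J} J" and "kat_le J {A. g -` A \<in> J}"
proof -
  have U: "\<Union>{A. g -` A \<in> J} = UNIV" "\<Union>J = UNIV"
    using Union_ideal_on[OF ideal_on_vimage_bij[OF J g]] Union_ideal_on[OF J] .
  show "kat_le {A. g -` A \<in> J} J"
    unfolding kat_le_def U using g by auto
  have "g -` (inv g -` A) = A" for A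
    using inv_o_cancel[OF bij_is_inj[OF g]] by (simp add: vimage_comp)
  then show "kat_le J {A. g -` A \<in> J}"
    unfolding kat_le_def U using bij_imp_bij_inv[OF g] by auto
qed

section \<open>The ideals Fin2 and BI\<close>

lemma finite_Fin2: "finite A \<Longrightarrow> A \<in> Fin2"
proof -
  assume "finite A"
  have "{m. (n, m) \<in> A} \<subseteq> snd ` A" for n
    by force
  then have "finite {m. (n, m) \<in> A}" for n
    using finite_subset finite_imageI[OF \<open>finite A\<close>] by blast
  then show ?thesis
    unfolding Fin2_def by simp
qed

lemma Fin2_subset:
  assumes "A \<in> Fin2" and "B \<subseteq> A"
  shows "B \<in> Fin2"
proof -
  have "{m. (n, m) \<in> B} \<subseteq> {m. (n, m) \<in> A}" for n
    using assms(2) by blast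
  then have "{n. infinite {m. (n, m) \<in> B}} \<subseteq> {n. infinite {m. (n, m) \<in> A}}"
    using finite_subset by blast
  with assms(1) show ?thesis
    unfolding Fin2_def using finite_subset by blast
qed

lemma Fin2_Un: "A \<in> Fin2 \<Longrightarrow> B \<in> Fin2 \<Longrightarrow> A \<union> B \<in> Fin2"
proof -
  assume "A \<in> Fin2" "B \<in> Fin2"
  moreover have "{n. infinite {m. (n, m) \<in> A \<union> B}}
      = {n. infinite {m. (n, m) \<in> A}} \<union> {n. infinite {m. (n, m) \<in> B}}"
    by (auto simp: Collect_disj_eq)
  ultimately show ?thesis
    unfolding Fin2_def by simp
qed

lemma UNIV_not_in_Fin2: "UNIV \<notin> Fin2"
  unfolding Fin2_def by simp

lemma ideal_Fin2: "ideal_on UNIV Fin2"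
proof (rule ideal_onI)
  show "infinite (UNIV :: (nat \<times> nat) set)"
    by (simp add: finite_prod)
qed (simp_all add: Fin2_subset Fin2_Un finite_Fin2 UNIV_not_in_Fin2)

lemma BI_iff:
  "A \<in> BI \<longleftrightarrow> (\<forall>i. {(j, l). (i, j, l) \<in> A} \<in> Fin2)
     \<and> (\<forall>\<^sub>F i in sequentially. finite {(j, l). (i, j, l) \<in> A})"
  unfolding BI_def eventually_sequentially
proof safe
  fix k i
  assume "\<forall>i<k. {(j, l). (i, j, l) \<in> A} \<in> Fin2" and "\<forall>i\<ge>k. finite {(j, l). (i, j, l) \<in> A}"
  then show "{(j, l). (i, j, l) \<in> A} \<in> Fin2"
    using finite_Fin2 by (cases "i < k") auto
next
  fix k
  assume "\<forall>i. {(j, l). (i, j, l) \<in> A} \<in> Fin2" and "\<forall>i\<ge>k. finite {(j, l). (i, j, l) \<in> A}"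
  then show "\<exists>k. (\<forall>i<k. {(j, l). (i, j, l) \<in> A} \<in> Fin2) \<and> (\<forall>i\<ge>k. finite {(j, l). (i, j, l) \<in> A})"
    by blast
qed blast

lemma BI_if_finite_sections:
  assumes "\<And>i. finite {(j, l). (i, j, l) \<in> A}"
  shows "A \<in> BI"
  unfolding BI_iff using assms finite_Fin2 by simp

lemma finite_BI: "finite A \<Longrightarrow> A \<in> BI"
proof (rule BI_if_finite_sections)
  fix i
  assume "finite A"
  have "{(j, l). (i, j, l) \<in> A} \<subseteq> snd ` A"
    by force
  then show "finite {(j, l). (i, j, l) \<in> A}"
    using finite_subset finite_imageI[OF \<open>finite A\<close>] by blast
qed

lemma BI_subset:
  assumes "A \<in> BI" and "B \<subseteq> A"
  shows "B \<in> BI"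
proof -
  have sub: "{(j, l). (i, j, l) \<in> B} \<subseteq> {(j, l). (i, j, l) \<in> A}" for i
    using assms(2) by blast
  have "{(j, l). (i, j, l) \<in> B} \<in> Fin2" for i
    using assms(1) Fin2_subset[OF _ sub] unfolding BI_iff by blast
  moreover have "\<forall>\<^sub>F i in sequentially. finite {(j, l). (i, j, l) \<in> B}"
    using assms(1) unfolding BI_iff by (auto elim: eventually_mono intro: finite_subset[OF sub])
  ultimately show ?thesis
    unfolding BI_iff by blast
qed

lemma BI_Un:
  assumes "A \<in> BI" and "B \<in> BI"
  shows "A \<union> B \<in> BI"
proof -
  have eq: "{(j, l). (i, j, l) \<in> A \<union> B} = {(j, l). (i, j, l) \<in> A} \<union> {(j, l). (i, j, l) \<in> B}" for i
    by blast
  have "{(j, l). (i, j, l) \<in> A \<union> B} \<in> Fin2" for i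
    using assms Fin2_Un unfolding BI_iff eq by blast
  moreover have "\<forall>\<^sub>F i in sequentially. finite {(j, l). (i, j, l) \<in> A \<union> B}"
    using assms unfolding BI_iff eq by (auto elim: eventually_elim2)
  ultimately show ?thesis
    unfolding BI_iff by blast
qed

lemma Times_Fin2_in_BI:
  assumes "B \<in> Fin2"
  shows "{k} \<times> B \<in> BI"
proof -
  have eq: "{(j, l). (i, j, l) \<in> {k} \<times> B} = (if i = k then B else {})" for i
    by auto
  have "{(j, l). (i, j, l) \<in> {k} \<times> B} \<in> Fin2" for i
    unfolding eq using assms finite_Fin2 by simp
  moreover have "\<forall>\<^sub>F i in sequentially. finite {(j, l). (i, j, l) \<in> {k} \<times> B}"
    unfolding eq eventually_sequentially by (intro exI[of _ "Suc k"]) simp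
  ultimately show ?thesis
    unfolding BI_iff by blast
qed

lemma BI_not_superset_column:
  assumes "S \<in> BI"
  shows "\<not> {i} \<times> UNIV \<subseteq> S"
proof
  assume "{i} \<times> UNIV \<subseteq> S"
  then have "{(j, l). (i, j, l) \<in> S} = UNIV"
    by blast
  moreover have "{(j, l). (i, j, l) \<in> S} \<in> Fin2"
    using assms unfolding BI_iff by blast
  ultimately show False
    using UNIV_not_in_Fin2 by simp
qed

lemma BI_finite_on_some_column:
  assumes "S \<in> BI"
  obtains i where "finite (S \<inter> {i} \<times> UNIV)"
proof -
  obtain i where "finite {(j, l). (i, j, l) \<in> S}"
    using assms unfolding BI_iff eventually_sequentially by blast
  moreover have "S \<inter> {i} \<times> UNIV = Pair i ` {(j, l). (i, j, l) \<in> S}"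
    by auto
  ultimately have "finite (S \<inter> {i} \<times> UNIV)"
    by simp
  then show ?thesis
    by (rule that)
qed

lemma ideal_BI: "ideal_on UNIV BI"
proof (rule ideal_onI)
  show "infinite (UNIV :: (nat \<times> nat \<times> nat) set)"
    by (simp add: finite_prod)
  show "UNIV \<notin> BI"
    using BI_not_superset_column by blast
qed (auto intro: BI_subset BI_Un finite_BI)

section \<open>Tall ideals\<close>

definition tall :: "'a set set \<Rightarrow> bool" where
  "tall I \<longleftrightarrow> (\<forall>D \<subseteq> \<Union>I. infinite D \<longrightarrow> (\<exists>B\<in>I. B \<subseteq> D \<and> infinite B))"

lemma tall_Fin2: "tall Fin2"
  unfolding tall_def
proof (intro allI impI)
  fix D :: "(nat \<times> nat) set"
  assume "infinite D"
  show "\<exists>B\<in>Fin2. B \<subseteq> D \<and> infinite B"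
  proof (cases "\<exists>n. infinite {m. (n, m) \<in> D}")
    case True
    then obtain n where n: "infinite {m. (n, m) \<in> D}"
      by blast
    define B where "B = Pair n ` {m. (n, m) \<in> D}"
    have "{m. (n', m) \<in> B} = {}" if "n' \<noteq> n" for n'
      using that unfolding B_def by auto
    then have "{n'. infinite {m. (n', m) \<in> B}} \<subseteq> {n}"
      by fastforce
    then have "B \<in> Fin2"
      unfolding Fin2_def using finite_subset by blast
    moreover have "infinite B"
      using n finite_imageD[of "Pair n"] unfolding B_def by (auto simp: inj_on_def)
    moreover have "B \<subseteq> D"
      unfolding B_def by blast
    ultimately show ?thesis
      by blast
  next
    case False
    then have "D \<in> Fin2"
      unfolding Fin2_def by simp
    with \<open>infinite D\<close> show ?thesis
      by blast
  qed
qed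

lemma tall_BI: "tall BI"
  unfolding tall_def
proof (intro allI impI)
  fix D :: "(nat \<times> nat \<times> nat) set"
  assume "infinite D"
  show "\<exists>B\<in>BI. B \<subseteq> D \<and> infinite B"
  proof (cases "\<exists>i. infinite {(j, l). (i, j, l) \<in> D}")
    case True
    then obtain i where "infinite {(j, l). (i, j, l) \<in> D}"
      by blast
    then obtain E where E: "E \<in> Fin2" "E \<subseteq> {(j, l). (i, j, l) \<in> D}" "infinite E"
      using tall_Fin2 unfolding tall_def Union_ideal_on[OF ideal_Fin2] by blast
    have "{i} \<times> E \<in> BI"
      using E(1) by (rule Times_Fin2_in_BI)
    moreover have "{i} \<times> E \<subseteq> D"
      using E(2) by auto
    moreover have "infinite ({i} \<times> E)"
      using E(3) by (auto simp: finite_cartesian_product_iff)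
    ultimately show ?thesis
      by blast
  next
    case False
    then have "D \<in> BI"
      by (intro BI_if_finite_sections) blast
    with \<open>infinite D\<close> show ?thesis
      by blast
  qed
qed

lemma tall_kat_le:
  assumes "kat_le J I" and "tall J" and down: "\<And>A B. A \<in> I \<Longrightarrow> B \<subseteq> A \<Longrightarrow> B \<in> I"
  shows "tall I"
  unfolding tall_def
proof (intro allI impI)
  obtain f where f: "bij_betw f (\<Union>I) (\<Union>J)" "\<forall>A\<in>J. f -` A \<inter> \<Union>I \<in> I"
    using assms(1) unfolding kat_le_def by blast
  fix D
  assume D: "D \<subseteq> \<Union>I" "infinite D"
  have "inj_on f D"
    using inj_on_subset[OF bij_betw_imp_inj_on[OF f(1)] D(1)] .
  then have "infinite (f ` D)"
    using D(2) finite_imageD by blast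
  moreover have "f ` D \<subseteq> f ` \<Union>I"
    using D(1) by (rule image_mono)
  then have "f ` D \<subseteq> \<Union>J"
    using bij_betw_imp_surj_on[OF f(1)] by simp
  ultimately obtain B where B: "B \<in> J" "B \<subseteq> f ` D" "infinite B"
    using assms(2) unfolding tall_def by blast
  have "f -` B \<inter> D \<subseteq> f -` B \<inter> \<Union>I"
    using D(1) by blast
  then have "f -` B \<inter> D \<in> I"
    using down f(2) B(1) by blast
  moreover have "f ` (f -` B \<inter> D) = B"
    using B(2) by blast
  then have "infinite (f -` B \<inter> D)"
    using B(3) finite_imageI by metis
  ultimately show "\<exists>B\<in>I. B \<subseteq> D \<and> infinite B"
    by blast
qed

section \<open>Fin2 is not below BI, but BI is below Fin2\<close>

lemma Fin2_meets_all:
  fixes P :: "nat \<Rightarrow> (nat \<times> nat) set"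
  assumes "\<And>i. infinite (fst ` P i)"
  obtains T where "T \<in> Fin2" and "\<And>k. infinite (T \<inter> P k)"
proof -
  \<comment> \<open>Over each n, T contains the lowest point of each of P 0, ..., P n above n; so all
    sections of T are finite, while T meets P k over every n \<ge> k in the projection of P k.\<close>
  define m where "m i n = (LEAST m. (n, m) \<in> P i)" for i n
  define T where "T = {(n, m i n) | i n. i \<le> n \<and> n \<in> fst ` P i}"
  have "{m'. (n, m') \<in> T} \<subseteq> (\<lambda>i. m i n) ` {..n}" for n
    unfolding T_def by auto
  then have "finite {m'. (n, m') \<in> T}" for n
    using finite_subset by blast
  then have "T \<in> Fin2"
    unfolding Fin2_def by simp
  moreover have "infinite (T \<inter> P k)" for k
  proof
    assume "finite (T \<inter> P k)"
    moreover have "fst ` P k \<inter> {k..} \<subseteq> fst ` (T \<inter> P k)"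
    proof
      fix n
      assume n: "n \<in> fst ` P k \<inter> {k..}"
      then obtain y where "(n, y) \<in> P k"
        by force
      then have "(n, m k n) \<in> P k"
        unfolding m_def by (rule LeastI)
      moreover have "(n, m k n) \<in> T"
        unfolding T_def using n by auto
      ultimately show "n \<in> fst ` (T \<inter> P k)"
        by force
    qed
    ultimately have "finite (fst ` P k \<inter> {k..})"
      using finite_subset finite_imageI by metis
    then have "finite (fst ` P k)"
      using finite_subset[of "fst ` P k" "{..<k} \<union> (fst ` P k \<inter> {k..})"] by fastforce
    with assms show False
      by blast
  qed
  ultimately show ?thesis
    by (rule that)
qed

lemma not_kat_le_Fin2_if_columns:
  fixes C :: "nat \<Rightarrow> 'a set"
  assumes C_sub: "\<And>i. C i \<subseteq> \<Union>J"
    and not_covered: "\<And>S i. S \<in> J \<Longrightarrow> \<not> C i \<subseteq> S"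
    and thin: "\<And>S. S \<in> J \<Longrightarrow> \<exists>i. finite (S \<inter> C i)"
  shows "\<not> kat_le Fin2 J"
proof
  assume "kat_le Fin2 J"
  then obtain f where f: "bij_betw f (\<Union>J) UNIV" "\<And>B. B \<in> Fin2 \<Longrightarrow> f -` B \<inter> \<Union>J \<in> J"
    unfolding kat_le_def Union_ideal_on[OF ideal_Fin2] by blast
  have projection_infinite: "infinite (fst ` f ` C i)" for i
  proof
    assume "finite (fst ` f ` C i)"
    then have "fst ` f ` C i \<times> UNIV \<in> Fin2"
      unfolding Fin2_def by (auto intro: rev_finite_subset[of "fst ` f ` C i"])
    moreover have "C i \<subseteq> f -` (fst ` f ` C i \<times> UNIV) \<inter> \<Union>J"
      using C_sub by (auto simp: mem_Times_iff)
    ultimately show False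
      using f(2) not_covered by blast
  qed
  obtain T where T: "T \<in> Fin2" "\<And>k. infinite (T \<inter> f ` C k)"
    using Fin2_meets_all[of "\<lambda>i. f ` C i", OF projection_infinite] by blast
  obtain k where "finite ((f -` T \<inter> \<Union>J) \<inter> C k)"
    using thin f(2)[OF T(1)] by blast
  moreover have "f ` ((f -` T \<inter> \<Union>J) \<inter> C k) = T \<inter> f ` C k"
    using C_sub[of k] by auto
  ultimately show False
    using T(2) finite_imageI by metis
qed

lemma not_kat_le_Fin2_BI: "\<not> kat_le Fin2 BI"
proof (rule not_kat_le_Fin2_if_columns[where C = "\<lambda>i. {i} \<times> UNIV"])
  show "{i} \<times> UNIV \<subseteq> \<Union>BI" for i
    using Union_ideal_on[OF ideal_BI] by simp
  show "\<not> {i} \<times> UNIV \<subseteq> S" if "S \<in> BI" for S i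
    using that by (rule BI_not_superset_column)
  show "\<exists>i. finite (S \<inter> {i} \<times> UNIV)" if "S \<in> BI" for S
    using BI_finite_on_some_column[OF that] by metis
qed

lemma kat_le_BI_Fin2: "kat_le BI Fin2"
proof -
  define u :: "nat \<times> nat \<Rightarrow> nat \<times> nat \<times> nat" where "u = (\<lambda>(n, m). (n, prod_decode m))"
  have "bij u"
    unfolding u_def
    by (rule bij_betw_byWitness[where f' = "\<lambda>(n, j, l). (n, prod_encode (j, l))"]) auto
  moreover have "u -` B \<in> Fin2" if B: "B \<in> BI" for B
  proof -
    obtain k where k: "\<And>i. i \<ge> k \<Longrightarrow> finite {(j, l). (i, j, l) \<in> B}"
      using B unfolding BI_iff eventually_sequentially by blast
    have "{m. (n, m) \<in> u -` B} = prod_decode -` {(j, l). (n, j, l) \<in> B}" for n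
      unfolding u_def by auto
    then have "finite {m. (n, m) \<in> u -` B}" if "n \<ge> k" for n
      using finite_vimageI[OF k[OF that] inj_prod_decode] by simp
    then have "{n. infinite {m. (n, m) \<in> u -` B}} \<subseteq> {..<k}"
      by (auto simp: not_less[symmetric])
    then show ?thesis
      unfolding Fin2_def using finite_subset by blast
  qed
  ultimately show ?thesis
    unfolding kat_le_def Union_ideal_on[OF ideal_BI] Union_ideal_on[OF ideal_Fin2] by auto
qed

section \<open>Boring ideals\<close>

lemma kat_le_Fin2_restr_column:
  assumes I: "ideal_on X I" and f: "bij_betw f X UNIV"
    and f_BI: "\<And>A. A \<in> BI \<Longrightarrow> f -` A \<inter> X \<in> I"
  shows "kat_le Fin2 (restr I (f -` ({k} \<times> UNIV) \<inter> X))"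
proof -
  define C where "C = f -` ({k} \<times> UNIV) \<inter> X"
  have "C \<subseteq> X"
    unfolding C_def by blast
  have "f ` C = {k} \<times> UNIV"
  proof
    show "f ` C \<subseteq> {k} \<times> UNIV"
      unfolding C_def by blast
    show "{k} \<times> UNIV \<subseteq> f ` C"
    proof
      fix p :: "nat \<times> nat \<times> nat"
      assume p: "p \<in> {k} \<times> UNIV"
      obtain x where "x \<in> X" "p = f x"
        using bij_betw_imp_surj_on[OF f] by (metis UNIV_I imageE)
      with p have "x \<in> C"
        unfolding C_def by simp
      then show "p \<in> f ` C"
        using \<open>p = f x\<close> by (rule rev_image_eqI)
    qed
  qed
  then have "bij_betw f C ({k} \<times> UNIV)"
    by (rule bij_betw_subset[OF f \<open>C \<subseteq> X\<close>])
  moreover have "bij_betw snd ({k} \<times> UNIV) (UNIV :: (nat \<times> nat) set)"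
    by (rule bij_betw_byWitness[where f' = "Pair k"]) auto
  ultimately have bij: "bij_betw (snd \<circ> f) C UNIV"
    by (rule bij_betw_trans)
  have "(snd \<circ> f) -` B \<inter> C \<in> restr I C" if "B \<in> Fin2" for B
  proof -
    have "(snd \<circ> f) -` B \<inter> C = (f -` ({k} \<times> B) \<inter> X) \<inter> C"
      unfolding C_def by (auto simp: mem_Times_iff)
    then show ?thesis
      using restr_IntI[OF f_BI[OF Times_Fin2_in_BI[OF that]]] by simp
  qed
  with bij have "kat_le Fin2 (restr I C)"
    unfolding kat_le_def Union_ideal_on[OF ideal_Fin2] Union_restr[OF I \<open>C \<subseteq> X\<close>] by blast
  then show ?thesis
    unfolding C_def .
qed

lemma kat_le_Fin2_if_columns_in_ideal:
  assumes I: "ideal_on X I" and f: "bij_betw f X UNIV"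
    and f_BI: "\<And>A. A \<in> BI \<Longrightarrow> f -` A \<inter> X \<in> I"
    and columns: "\<And>k. f -` ({k} \<times> UNIV) \<inter> X \<in> I"
  shows "kat_le Fin2 I"
proof -
  define flat :: "nat \<times> nat \<times> nat \<Rightarrow> nat \<times> nat" where "flat = (\<lambda>(i, j, l). (i, prod_encode (j, l)))"
  have "bij flat"
    unfolding flat_def by (rule bij_betw_byWitness[where f' = "\<lambda>(i, m). (i, prod_decode m)"]) auto
  then have bij: "bij_betw (flat \<circ> f) X UNIV"
    using f by (simp add: bij_betw_trans)
  have "(flat \<circ> f) -` B \<inter> X \<in> I" if B: "B \<in> Fin2" for B
  proof -
    define F where "F = {i. infinite {m. (i, m) \<in> B}}"
    define R where "R = flat -` B - F \<times> UNIV"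
    have "finite {(j, l). (i, j, l) \<in> R}" for i
    proof (cases "i \<in> F")
      case False
      then have "finite {m. (i, m) \<in> B}"
        unfolding F_def by simp
      moreover have "{(j, l). (i, j, l) \<in> R} \<subseteq> prod_encode -` {m. (i, m) \<in> B}"
        unfolding R_def flat_def by auto
      ultimately show ?thesis
        using finite_vimageI[OF _ inj_prod_encode] finite_subset by blast
    qed (simp add: R_def)
    then have "f -` R \<inter> X \<in> I"
      by (intro f_BI BI_if_finite_sections)
    moreover have "finite F"
      using B unfolding F_def Fin2_def by simp
    then have "(\<Union>i\<in>F. f -` ({i} \<times> UNIV) \<inter> X) \<in> I"
      by (rule ideal_on_UN[OF I]) (rule columns)
    moreover have "(flat \<circ> f) -` B \<inter> X \<subseteq> (f -` R \<inter> X) \<union> (\<Union>i\<in>F. f -` ({i} \<times> UNIV) \<inter> X)"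
      unfolding R_def by (auto simp: mem_Times_iff)
    ultimately show ?thesis
      using ideal_on_Un[OF I] ideal_on_subset[OF I] by meson
  qed
  with bij show ?thesis
    unfolding kat_le_def Union_ideal_on[OF ideal_Fin2] Union_ideal_on[OF I] by blast
qed

lemma boring_imp_not_hereditary_weak_P:
  assumes I: "ideal_on X I" and "boring I"
  shows "\<not> hereditary_weak_P I"
proof -
  obtain f where f: "bij_betw f X UNIV" and f_BI: "\<And>A. A \<in> BI \<Longrightarrow> f -` A \<inter> X \<in> I"
    using assms(2) unfolding boring_def kat_le_def Union_ideal_on[OF I] Union_ideal_on[OF ideal_BI]
    by blast
  have "\<exists>A. A \<subseteq> X \<and> A \<notin> I \<and> kat_le Fin2 (restr I A)"
  proof (cases "\<exists>k. f -` ({k} \<times> UNIV) \<inter> X \<notin> I")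
    case True
    then obtain k where "f -` ({k} \<times> UNIV) \<inter> X \<notin> I"
      by blast
    with kat_le_Fin2_restr_column[OF I f f_BI, of k] show ?thesis
      by blast
  next
    case False
    then have "kat_le Fin2 (restr I X)"
      using kat_le_Fin2_if_columns_in_ideal[OF I f f_BI] restr_ideal_on_self[OF I] by simp
    with ideal_on_carrier[OF I] show ?thesis
      by blast
  qed
  then show ?thesis
    unfolding hereditary_weak_P_def Union_ideal_on[OF I] by blast
qed

lemma weak_P_if_unboring: "unboring I \<Longrightarrow> weak_P I"
  unfolding unboring_def boring_def weak_P_def using kat_le_trans[OF kat_le_BI_Fin2] by blast

lemma unboring_subset:
  assumes "ideal_on X I" and "ideal_on X J" and "I \<subseteq> J" and "unboring J"
  shows "unboring I"
  unfolding unboring_def boring_def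
proof
  assume "kat_le BI I"
  then have "kat_le BI J"
    using assms(3) by (rule kat_le_superset)
      (simp add: Union_ideal_on[OF assms(1)] Union_ideal_on[OF assms(2)])
  with assms(4) show False
    unfolding unboring_def boring_def by blast
qed

lemma tall_if_boring:
  assumes "ideal_on X I" and "boring I"
  shows "tall I"
  using assms(2) unfolding boring_def
  by (rule tall_kat_le[OF _ tall_BI]) (rule ideal_on_subset[OF assms(1)])

section \<open>Examples on \<omega>\<close>

definition triple_encode :: "nat \<times> nat \<times> nat \<Rightarrow> nat" where
  "triple_encode = (\<lambda>(i, j, l). prod_encode (i, prod_encode (j, l)))"

lemma bij_triple_encode: "bij triple_encode"
  unfolding triple_encode_def
  by (rule bij_betw_byWitness[where
        f' = "\<lambda>n. (fst (prod_decode n), prod_decode (snd (prod_decode n)))"]) auto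

definition BI_nat :: "nat set set" where
  "BI_nat = {A. triple_encode -` A \<in> BI}"

lemma ideal_BI_nat: "ideal_on UNIV BI_nat"
  unfolding BI_nat_def using ideal_BI bij_triple_encode by (rule ideal_on_vimage_bij)

lemma boring_BI_nat: "boring BI_nat"
  unfolding BI_nat_def boring_def using ideal_BI bij_triple_encode by (rule kat_le_vimage_bij)

lemma weak_P_BI_nat: "weak_P BI_nat"
proof -
  have "kat_le BI_nat BI"
    unfolding BI_nat_def using ideal_BI bij_triple_encode by (rule kat_le_vimage_bij)
  then show ?thesis
    unfolding weak_P_def using not_kat_le_Fin2_BI kat_le_trans by blast
qed

definition even_code :: "nat \<times> nat \<Rightarrow> nat" where
  "even_code p = 2 * prod_encode p"

definition odd_code :: "nat \<Rightarrow> nat" where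
  "odd_code k = 2 * k + 1"

definition Fin2_plus_Fin :: "nat set set" where
  "Fin2_plus_Fin = {A. even_code -` A \<in> Fin2 \<and> finite (odd_code -` A)}"

lemma inj_even_code: "inj even_code"
  unfolding even_code_def by (auto intro: injI)

lemma inj_odd_code: "inj odd_code"
  unfolding odd_code_def by (auto intro: injI)

lemma odd_code_vimage_even_code: "odd_code -` even_code ` B = {}"
  unfolding even_code_def odd_code_def by auto presburger

lemma ideal_Fin2_plus_Fin: "ideal_on UNIV Fin2_plus_Fin"
proof (rule ideal_onI)
  show "B \<in> Fin2_plus_Fin" if "A \<in> Fin2_plus_Fin" "B \<subseteq> A" for A B
    using that Fin2_subset[of "even_code -` A" "even_code -` B"]
      finite_subset[of "odd_code -` B" "odd_code -` A"]
    unfolding Fin2_plus_Fin_def by auto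
  show "A \<union> B \<in> Fin2_plus_Fin" if "A \<in> Fin2_plus_Fin" "B \<in> Fin2_plus_Fin" for A B
    using that Fin2_Un unfolding Fin2_plus_Fin_def by simp
  show "F \<in> Fin2_plus_Fin" if "finite F" for F
    using finite_vimageI[OF that inj_even_code] finite_vimageI[OF that inj_odd_code] finite_Fin2
    unfolding Fin2_plus_Fin_def by simp
  show "UNIV \<notin> Fin2_plus_Fin"
    using UNIV_not_in_Fin2 unfolding Fin2_plus_Fin_def by simp
qed simp_all

lemma not_tall_Fin2_plus_Fin: "\<not> tall Fin2_plus_Fin"
proof
  assume "tall Fin2_plus_Fin"
  moreover have "infinite (range odd_code)"
    using inj_odd_code by (simp add: finite_image_iff)
  ultimately obtain B where B: "B \<in> Fin2_plus_Fin" "B \<subseteq> range odd_code" "infinite B"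
    unfolding tall_def Union_ideal_on[OF ideal_Fin2_plus_Fin] by blast
  then have "B = odd_code ` (odd_code -` B)"
    by blast
  with B show False
    unfolding Fin2_plus_Fin_def by (metis finite_imageI mem_Collect_eq)
qed

lemma not_hereditary_weak_P_Fin2_plus_Fin: "\<not> hereditary_weak_P Fin2_plus_Fin"
proof -
  define g where "g y = prod_decode (y div 2)" for y
  have "bij_betw g (range even_code) UNIV"
    by (rule bij_betw_byWitness[where f' = even_code]) (auto simp: g_def even_code_def)
  moreover have "g -` B \<inter> range even_code \<in> restr Fin2_plus_Fin (range even_code)"
    if "B \<in> Fin2" for B
  proof -
    have "even_code ` B \<in> Fin2_plus_Fin"
      using that odd_code_vimage_even_code
      unfolding Fin2_plus_Fin_def by (simp add: inj_vimage_image_eq[OF inj_even_code])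
    moreover have "g -` B \<inter> range even_code = even_code ` B \<inter> range even_code"
      by (auto simp: g_def even_code_def)
    ultimately show ?thesis
      using restr_IntI by metis
  qed
  ultimately have "kat_le Fin2 (restr Fin2_plus_Fin (range even_code))"
    unfolding kat_le_def Union_restr[OF ideal_Fin2_plus_Fin subset_UNIV]
      Union_ideal_on[OF ideal_Fin2] by blast
  moreover have "even_code -` range even_code = UNIV"
    by blast
  then have "range even_code \<notin> Fin2_plus_Fin"
    using UNIV_not_in_Fin2 unfolding Fin2_plus_Fin_def by simp
  ultimately show ?thesis
    unfolding hereditary_weak_P_def Union_ideal_on[OF ideal_Fin2_plus_Fin] by blast
qed

theorem proposition4p10:
  shows
    "(\<forall>(X :: 'a set) I. ideal_on X I \<longrightarrow>
        (hereditary_weak_P I \<longrightarrow> unboring I) \<and> (unboring I \<longrightarrow> weak_P I))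
   \<and> (\<exists>(X :: nat set) I. ideal_on X I \<and> unboring I \<and> \<not> hereditary_weak_P I)
   \<and> (\<exists>(X :: nat set) I. ideal_on X I \<and> weak_P I \<and> boring I)
   \<and> (\<forall>(X :: 'b set) I. ideal_on X I \<longrightarrow>
        ((\<exists>J. ideal_on X J \<and> I \<subseteq> J \<and> unboring J) \<longrightarrow> unboring I)
      \<and> ((\<exists>J. ideal_on X J \<and> I \<subseteq> J \<and> hereditary_weak_P J) \<longrightarrow> unboring I))"
proof (intro conjI allI impI)
  fix X :: "'a set" and I
  assume "ideal_on X I"
  then show "hereditary_weak_P I \<Longrightarrow> unboring I"
    using boring_imp_not_hereditary_weak_P unfolding unboring_def by blast
  show "unboring I \<Longrightarrow> weak_P I"
    by (rule weak_P_if_unboring)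
next
  show "\<exists>(X :: nat set) I. ideal_on X I \<and> unboring I \<and> \<not> hereditary_weak_P I"
    using ideal_Fin2_plus_Fin not_tall_Fin2_plus_Fin tall_if_boring
      not_hereditary_weak_P_Fin2_plus_Fin
    unfolding unboring_def by blast
  show "\<exists>(X :: nat set) I. ideal_on X I \<and> weak_P I \<and> boring I"
    using ideal_BI_nat weak_P_BI_nat boring_BI_nat by blast
next
  fix X :: "'b set" and I
  assume I: "ideal_on X I"
  show "unboring I" if "\<exists>J. ideal_on X J \<and> I \<subseteq> J \<and> unboring J"
    using that unboring_subset[OF I] by blast
  show "unboring I" if "\<exists>J. ideal_on X J \<and> I \<subseteq> J \<and> hereditary_weak_P J"
    using that unboring_subset[OF I] boring_imp_not_hereditary_weak_P
    unfolding unboring_def by blast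
qed

end
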